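(* Fix the finite sets $S,B$ and the transition function $p$, and identify a game with its payoff function $u\in\mathbb{R}^{2\times S\times B}$. Let a game $G$ be given. (i) If condition B holds for $G$, then every neighborhood of $G$ contains a game $G'$ with $\widehat{E}_{G'}(\mathcal{M})\neq\emptyset$. (ii) If condition B does not hold for $G$, then there is a neighborhood $\mathcal{N}$ of $G$ such that condition B does not hold for any game in $\mathcal{N}$.
   Context: Setting: finite state set $S$, message set $A=S$, finite action set $B$ of the receiver, an irreducible aperiodic Markov chain on $S$ with transition function $p$ and invariant measure $m\in\Delta(S)$; a game is a payoff function $u=(u^1,u^2):S\times B\to\mathbb{R}^2$ (player 1 = sender, player 2 = receiver), extended linearly to mixed actions. $\mathcal{M}\subset\Delta(S\times A)$ is the set of distributions with both marginals equal to $m$; $\mu_0(s,s)=m(s)$, $\mu_0(s,a)=0$ for $s\ne a$. For $\mu\in\mathcal{M}$ and $y:A\to\Delta(B)$, $U(\mu,y)=\sum_{s,a}\mu(s,a)u(s,y(\cdot\mid a))$, and $v^2=\max_{b\in B}\sum_s m(s)u^2(s,b)$ (all computed with the payoff function of the game under consideration). Conditions on $y$: (C1) $U^1(\mu_0,y)\ge U^1(\mu,y)$ for all $\mu\in\mathcal{M}$; (C2) $U^2(\mu_0,y)\ge v^2$; (D1) $U^1(\mu_0,y)>U^1(\mu,y)$ for all $\mu\in\mathcal{M}$, $\mu\ne\mu_0$; (D2) $U^2(\mu_0,y)>v^2$. $\widehat{E}_{G}(\mathcal{M})$ is the set of vectors $U(\mu_0,y)$ with $y$ satisfying (D1),(D2)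 in game $G$. Condition B for a game: there is a non-constant map $y:S\to\Delta(B)$ satisfying (C1) and (C2) in that game. *)

theory Defs
  imports "HOL-Analysis.Analysis"
begin

text \<open>The set of games carries the product
  topology (Function_Topology), which for finite S, B is the Euclidean topology
  of R^(2 x S x B).\<close>

type_synonym ('s,'b) game = "'s \<Rightarrow> 'b \<Rightarrow> real \<times> real"

definition is_distr :: "('a::finite \<Rightarrow> real) \<Rightarrow> bool" where
  "is_distr q \<longleftrightarrow> (\<forall>x. q x \<ge> 0) \<and> (\<Sum>x\<in>UNIV. q x) = 1"

definition stochastic :: "('s::finite \<Rightarrow> 's \<Rightarrow> real) \<Rightarrow> bool" where
  "stochastic p \<longleftrightarrow> (\<forall>s. is_distr (p s))"

fun tpow :: "('s::finite \<Rightarrow> 's \<Rightarrow> real) \<Rightarrow> nat \<Rightarrow> 's \<Rightarrow> 's \<Rightarrow> real" where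
  "tpow p 0 s t = (if s = t then 1 else 0)"
| "tpow p (Suc n) s t = (\<Sum>r\<in>UNIV. tpow p n s r * p r t)"

definition irreducible_chain :: "('s::finite \<Rightarrow> 's \<Rightarrow> real) \<Rightarrow> bool" where
  "irreducible_chain p \<longleftrightarrow> (\<forall>s t. \<exists>n>0. tpow p n s t > 0)"

definition aperiodic_chain :: "('s::finite \<Rightarrow> 's \<Rightarrow> real) \<Rightarrow> bool" where
  "aperiodic_chain p \<longleftrightarrow> (\<forall>s. Gcd {n. n > 0 \<and> tpow p n s s > 0} = 1)"

definition invariant_measure :: "('s::finite \<Rightarrow> 's \<Rightarrow> real) \<Rightarrow> ('s \<Rightarrow> real) \<Rightarrow> bool" where
  "invariant_measure p m \<longleftrightarrow> is_distr m \<and> (\<forall>t. (\<Sum>s\<in>UNIV. m s * p s t) = m t)"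

text \<open>The set M: distributions on S x A (A = S) with both marginals equal to m.\<close>
definition Mset :: "('s::finite \<Rightarrow> real) \<Rightarrow> ('s \<Rightarrow> 's \<Rightarrow> real) set" where
  "Mset m = {\<mu>. (\<forall>s a. \<mu> s a \<ge> 0) \<and> (\<Sum>s\<in>UNIV. \<Sum>a\<in>UNIV. \<mu> s a) = 1
               \<and> (\<forall>s. (\<Sum>a\<in>UNIV. \<mu> s a) = m s) \<and> (\<forall>a. (\<Sum>s\<in>UNIV. \<mu> s a) = m a)}"

definition mu0 :: "('s::finite \<Rightarrow> real) \<Rightarrow> 's \<Rightarrow> 's \<Rightarrow> real" where
  "mu0 m s a = (if s = a then m s else 0)"

definition is_strategy :: "('s \<Rightarrow> 'b::finite \<Rightarrow> real) \<Rightarrow> bool" where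
  "is_strategy y \<longleftrightarrow> (\<forall>a. is_distr (y a))"

definition mixed_payoff :: "('s,'b::finite) game \<Rightarrow> 's \<Rightarrow> ('b \<Rightarrow> real) \<Rightarrow> real \<times> real" where
  "mixed_payoff u s q = (\<Sum>b\<in>UNIV. q b *\<^sub>R u s b)"

definition Upay :: "('s::finite,'b::finite) game \<Rightarrow> ('s \<Rightarrow> 's \<Rightarrow> real) \<Rightarrow> ('s \<Rightarrow> 'b \<Rightarrow> real) \<Rightarrow> real \<times> real" where
  "Upay u \<mu> y = (\<Sum>s\<in>UNIV. \<Sum>a\<in>UNIV. \<mu> s a *\<^sub>R mixed_payoff u s (y a))"

definition v2 :: "('s::finite,'b::finite) game \<Rightarrow> ('s \<Rightarrow> real) \<Rightarrow> real" where
  "v2 u m = Max (range (\<lambda>b. \<Sum>s\<in>UNIV. m s * snd (u s b)))"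

definition C1 :: "('s::finite,'b::finite) game \<Rightarrow> ('s \<Rightarrow> real) \<Rightarrow> ('s \<Rightarrow> 'b \<Rightarrow> real) \<Rightarrow> bool" where
  "C1 u m y \<longleftrightarrow> (\<forall>\<mu>\<in>Mset m. fst (Upay u (mu0 m) y) \<ge> fst (Upay u \<mu> y))"

definition C2 :: "('s::finite,'b::finite) game \<Rightarrow> ('s \<Rightarrow> real) \<Rightarrow> ('s \<Rightarrow> 'b \<Rightarrow> real) \<Rightarrow> bool" where
  "C2 u m y \<longleftrightarrow> snd (Upay u (mu0 m) y) \<ge> v2 u m"

definition D1 :: "('s::finite,'b::finite) game \<Rightarrow> ('s \<Rightarrow> real) \<Rightarrow> ('s \<Rightarrow> 'b \<Rightarrow> real) \<Rightarrow> bool" where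
  "D1 u m y \<longleftrightarrow> (\<forall>\<mu>\<in>Mset m. \<mu> \<noteq> mu0 m \<longrightarrow> fst (Upay u (mu0 m) y) > fst (Upay u \<mu> y))"

definition D2 :: "('s::finite,'b::finite) game \<Rightarrow> ('s \<Rightarrow> real) \<Rightarrow> ('s \<Rightarrow> 'b \<Rightarrow> real) \<Rightarrow> bool" where
  "D2 u m y \<longleftrightarrow> snd (Upay u (mu0 m) y) > v2 u m"

definition Ehat :: "('s::finite,'b::finite) game \<Rightarrow> ('s \<Rightarrow> real) \<Rightarrow> (real \<times> real) set" where
  "Ehat u m = {Upay u (mu0 m) y | y. is_strategy y \<and> D1 u m y \<and> D2 u m y}"

definition conditionB :: "('s::finite,'b::finite) game \<Rightarrow> ('s \<Rightarrow> real) \<Rightarrow> bool" where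
  "conditionB u m \<longleftrightarrow> (\<exists>y. is_strategy y \<and> (\<exists>s t. y s \<noteq> y t) \<and> C1 u m y \<and> C2 u m y)"

end

theory Submission
  imports Defs
begin

text \<open>
  (i) Take a nonconstant \<open>y\<close> satisfying C1 and C2 and replace it by a nearby injective strategy
  \<open>y'\<close> that still satisfies C1. Adding \<open>\<epsilon> y'\<close> to the sender's payoff rewards truth-telling by
  \<open>\<epsilon>/2 \<Sum>\<^sub>b \<Sum> \<mu>(s,a) (y'(s,b) - y'(a,b))\<^sup>2\<close>, which is positive for \<open>\<mu> \<noteq> \<mu>\<^sub>0\<close> and makes C1 strict.
  Adding \<open>\<epsilon> (y - y\<^sub>m)\<close> to the receiver's payoff, where \<open>y\<^sub>m\<close> is the \<open>m\<close>-average of \<open>y\<close>, leaves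
  the payoffs of actions under the prior unchanged but raises \<open>U\<^sup>2(\<mu>\<^sub>0, y)\<close> by \<open>\<epsilon>\<close> times the
  \<open>m\<close>-variance of \<open>y\<close>, which makes C2 strict.

  (ii) The set of games with condition B is closed. Along a converging sequence of such games,
  normalize the witnesses by their spread after subtracting their average, pushed onto the set
  \<open>A\<close> of prior best replies of the limit game. C2 bounds the average weight on actions outside
  \<open>A\<close> relative to the spread, so these directions are bounded; a limit point is a nonconstant
  direction along which the uniform mixture on \<open>A\<close> can be moved to a witness for the limit.
\<close>

text \<open>In the notation of the paper, \<open>sender_gap u \<mu> y\<close> is \<open>U\<^sup>1(\<mu>\<^sub>0, y) - U\<^sup>1(\<mu>, y)\<close>,
  \<open>receiver_value u m y\<close> is \<open>U\<^sup>2(\<mu>\<^sub>0, y)\<close>, and \<open>pooled_payoff u m b\<close> is the receiver's payoff from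
  \<open>b\<close> without information, whose maximum is \<open>v\<^sup>2\<close>.\<close>
definition sender_gap :: "('s::finite, 'b::finite) game \<Rightarrow> ('s \<Rightarrow> 's \<Rightarrow> real) \<Rightarrow> ('s \<Rightarrow> 'b \<Rightarrow> real) \<Rightarrow> real" where
  "sender_gap u \<mu> y = (\<Sum>s\<in>UNIV. \<Sum>a\<in>UNIV. \<mu> s a * (\<Sum>b\<in>UNIV. (y s b - y a b) * fst (u s b)))"

definition receiver_value :: "('s::finite, 'b::finite) game \<Rightarrow> ('s \<Rightarrow> real) \<Rightarrow> ('s \<Rightarrow> 'b \<Rightarrow> real) \<Rightarrow> real" where
  "receiver_value u m y = (\<Sum>s\<in>UNIV. m s * (\<Sum>b\<in>UNIV. y s b * snd (u s b)))"

definition pooled_payoff :: "('s::finite, 'b::finite) game \<Rightarrow> ('s \<Rightarrow> real) \<Rightarrow> 'b \<Rightarrow> real" where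
  "pooled_payoff u m b = (\<Sum>s\<in>UNIV. m s * snd (u s b))"

definition receiver_payoff_size :: "('s::finite, 'b::finite) game \<Rightarrow> ('s \<Rightarrow> real) \<Rightarrow> real" where
  "receiver_payoff_size u m = (\<Sum>s\<in>UNIV. m s * (\<Sum>b\<in>UNIV. \<bar>snd (u s b)\<bar>))"

definition mean_mix :: "('s::finite \<Rightarrow> real) \<Rightarrow> ('s \<Rightarrow> 'b \<Rightarrow> real) \<Rightarrow> 'b \<Rightarrow> real" where
  "mean_mix m y b = (\<Sum>s\<in>UNIV. m s * y s b)"

definition spread :: "('s::finite \<Rightarrow> 'b::finite \<Rightarrow> real) \<Rightarrow> real" where
  "spread y = (\<Sum>s\<in>UNIV. \<Sum>t\<in>UNIV. \<Sum>b\<in>UNIV. \<bar>y s b - y t b\<bar>)"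

section \<open>Elementary analysis\<close>

lemma tendsto_fun_iff:
  fixes f :: "'a \<Rightarrow> 'i \<Rightarrow> 'b::topological_space"
  shows "(f \<longlongrightarrow> l) F \<longleftrightarrow> (\<forall>i. ((\<lambda>x. f x i) \<longlongrightarrow> l i) F)"
  using limitin_componentwise[of "\<lambda>_. euclidean" UNIV f l F]
  by (simp add: euclidean_product_topology)

lemma closure_of_scaled_perturbations:
  fixes G :: "'a::countable \<Rightarrow> 'c::countable \<Rightarrow> 'v::real_normed_vector"
  assumes "\<And>\<epsilon>. 0 < \<epsilon> \<Longrightarrow> \<exists>P. (\<forall>x z. norm (P x z) \<le> C) \<and> (\<lambda>x z. G x z + \<epsilon> *\<^sub>R P x z) \<in> S"
  shows "G \<in> closure S"
proof -
  have "\<forall>k. \<exists>Pk. (\<forall>x z. norm (Pk x z) \<le> C) \<and> (\<lambda>x z. G x z + inverse (real (Suc k)) *\<^sub>R Pk x z) \<in> S"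
    using assms by simp
  from choice[OF this] obtain P where P: "\<And>k x z. norm (P k x z) \<le> C"
    "\<And>k. (\<lambda>x z. G x z + inverse (real (Suc k)) *\<^sub>R P k x z) \<in> S"
    by blast
  define g where "g k = (\<lambda>x z. G x z + inverse (real (Suc k)) *\<^sub>R P k x z)" for k
  have "(\<lambda>k. g k x z) \<longlonglongrightarrow> G x z" for x z
    unfolding g_def
  proof (rule LIM_zero_cancel, rule Lim_null_comparison)
    show "\<forall>\<^sub>F k in sequentially. norm (G x z + inverse (real (Suc k)) *\<^sub>R P k x z - G x z) \<le> C * inverse (real (Suc k))"
      using P(1) by (intro always_eventually allI) (simp add: mult_right_mono mult.commute)
    show "(\<lambda>k. C * inverse (real (Suc k))) \<longlonglongrightarrow> 0"
      by (rule tendsto_mult_right_zero[OF LIMSEQ_inverse_real_of_nat])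
  qed
  then have "g \<longlonglongrightarrow> G"
    by (simp add: tendsto_fun_iff)
  moreover have "g k \<in> S" for k
    using P(2) by (simp add: g_def)
  ultimately show ?thesis
    unfolding closure_sequential by blast
qed

lemma bounded_functions_convergent_subseq:
  fixes h :: "nat \<Rightarrow> 'a::finite \<Rightarrow> real"
  assumes "eventually (\<lambda>k. \<forall>x. \<bar>h k x\<bar> \<le> R) sequentially"
  shows "\<exists>\<phi> l. strict_mono \<phi> \<and> (\<forall>x. (\<lambda>j. h (\<phi> j) x) \<longlonglongrightarrow> l x)"
proof -
  obtain k0 where k0: "\<And>k x. k0 \<le> k \<Longrightarrow> \<bar>h k x\<bar> \<le> R"
    using assms by (auto simp: eventually_sequentially)
  define z :: "nat \<Rightarrow> real^'a" where "z j = (\<chi> x. h (k0 + j) x)" for j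
  have "bounded (range z)"
    unfolding bounded_iff
  proof (intro exI ballI)
    fix v
    assume "v \<in> range z"
    then obtain j where "v = z j"
      by auto
    have "norm v \<le> (\<Sum>x\<in>UNIV. \<bar>v $ x\<bar>)"
      by (rule norm_le_l1_cart)
    also have "\<dots> \<le> (\<Sum>x\<in>(UNIV::'a set). R)"
      by (rule sum_mono) (simp add: \<open>v = z j\<close> z_def k0)
    finally show "norm v \<le> CARD('a) * R"
      by simp
  qed
  then obtain l r where "strict_mono r" "(z \<circ> r) \<longlonglongrightarrow> l"
    using bounded_imp_convergent_subsequence by blast
  moreover have "strict_mono (\<lambda>j. k0 + r j)"
    using \<open>strict_mono r\<close> by (simp add: strict_mono_def)
  moreover have "(\<lambda>j. h (k0 + r j) x) \<longlonglongrightarrow> l $ x" for x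
    using tendsto_vec_nth[OF \<open>(z \<circ> r) \<longlonglongrightarrow> l\<close>, of x] by (simp add: z_def o_def)
  ultimately show ?thesis
    by blast
qed

lemma finite_nonzero_abs_lower_bound:
  fixes f :: "'a::finite \<Rightarrow> real"
  obtains \<gamma> where "0 < \<gamma>" "\<And>x. f x \<noteq> 0 \<Longrightarrow> \<gamma> \<le> \<bar>f x\<bar>"
proof
  let ?D = "insert 1 (abs ` f ` {x. f x \<noteq> 0})"
  show "0 < Min ?D"
    by (subst Min_gr_iff) auto
  show "Min ?D \<le> \<bar>f x\<bar>" if "f x \<noteq> 0" for x
    by (rule Min_le) (use that in auto)
qed

lemma exists_inj_unit_interval:
  obtains r :: "'a::countable \<Rightarrow> real" where "inj r" "\<And>x. 0 \<le> r x \<and> r x < 1"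
proof
  show "inj (\<lambda>x. 1 - inverse (real (to_nat x) + 1))"
    by (rule injI) simp
  show "0 \<le> 1 - inverse (real (to_nat x) + 1) \<and> 1 - inverse (real (to_nat x) + 1) < 1" for x :: 'a
    by (simp add: inverse_le_1_iff)
qed

lemma abs_le_double_sum_abs:
  fixes f :: "'a::finite \<Rightarrow> 'c::finite \<Rightarrow> real"
  shows "\<bar>f x z\<bar> \<le> (\<Sum>x\<in>UNIV. \<Sum>z\<in>UNIV. \<bar>f x z\<bar>)"
proof -
  have "\<bar>f x z\<bar> \<le> (\<Sum>z\<in>UNIV. \<bar>f x z\<bar>)"
    by (rule member_le_sum) auto
  also have "\<dots> \<le> (\<Sum>x\<in>UNIV. \<Sum>z\<in>UNIV. \<bar>f x z\<bar>)"
    by (rule member_le_sum[of x _ "\<lambda>x. \<Sum>z\<in>UNIV. \<bar>f x z\<bar>"]) (auto intro: sum_nonneg)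
  finally show ?thesis .
qed

lemma quadratic_dominates_small_shift:
  fixes d \<gamma> r :: real
  assumes "0 < \<gamma>" "d \<noteq> 0 \<Longrightarrow> \<gamma> \<le> \<bar>d\<bar>" "0 \<le> r" "r < 1"
  shows "0 \<le> d\<^sup>2 / 2 - \<gamma> / 2 * (r * d)"
proof (cases "d = 0")
  case False
  have "r * d \<le> r * \<bar>d\<bar>"
    using assms(3) by (simp add: mult_left_mono)
  also have "\<dots> \<le> \<bar>d\<bar>"
    using assms(3,4) by (simp add: mult_left_le_one_le)
  finally have "\<gamma> * (r * d) \<le> \<gamma> * \<bar>d\<bar>"
    using assms(1) by (simp add: mult_left_mono)
  also have "\<dots> \<le> \<bar>d\<bar> * \<bar>d\<bar>"
    by (rule mult_right_mono[OF assms(2)[OF False]]) simp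
  finally show ?thesis
    by (simp add: power2_eq_square abs_mult_self_eq)
qed simp

lemma inj_add_small_perturbation:
  fixes y v :: "'s \<Rightarrow> 'b \<Rightarrow> real"
  assumes "inj v"
    and "\<And>s a b. y s b \<noteq> y a b \<Longrightarrow> \<gamma> \<le> \<bar>y s b - y a b\<bar>"
    and "\<And>s a b. \<bar>v s b - v a b\<bar> < \<gamma>"
  shows "inj (\<lambda>s b. y s b + v s b)"
proof (rule injI)
  fix s a
  assume eq: "(\<lambda>b. y s b + v s b) = (\<lambda>b. y a b + v a b)"
  have "y s b = y a b" for b
  proof (rule ccontr)
    assume "y s b \<noteq> y a b"
    moreover have "y s b - y a b = - (v s b - v a b)"
      using fun_cong[OF eq, of b] by simp
    ultimately show False
      using assms(2)[of s b a] assms(3)[of s b a] by simp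
  qed
  with eq have "v s = v a"
    by (simp add: fun_eq_iff)
  then show "s = a"
    using assms(1) by (simp add: inj_eq)
qed

section \<open>Strategies and the invariant measure\<close>

lemma is_strategy_nonneg: "is_strategy y \<Longrightarrow> 0 \<le> y s b"
  by (simp add: is_strategy_def is_distr_def)

lemma is_strategy_sum: "is_strategy y \<Longrightarrow> (\<Sum>b\<in>UNIV. y s b) = 1"
  by (simp add: is_strategy_def is_distr_def)

lemma is_strategy_le_1:
  assumes "is_strategy y"
  shows "y s b \<le> 1"
proof -
  have "y s b \<le> (\<Sum>b\<in>UNIV. y s b)"
    by (rule member_le_sum) (simp_all add: is_strategy_nonneg[OF assms])
  then show ?thesis
    by (simp add: is_strategy_sum[OF assms])
qed

lemma is_strategy_nonconstant_two_actions:
  fixes y :: "'s \<Rightarrow> 'b::finite \<Rightarrow> real"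
  assumes "is_strategy y" "y s \<noteq> y t"
  obtains b1 b2 :: 'b where "b1 \<noteq> b2"
proof -
  obtain b where b: "y s b \<noteq> y t b"
    using assms(2) by auto
  show thesis
  proof (cases "UNIV = {b}")
    case True
    have "y s b = 1" "y t b = 1"
      using is_strategy_sum[OF assms(1), of s] is_strategy_sum[OF assms(1), of t] by (simp_all add: True)
    with b show thesis
      by simp
  next
    case False
    then obtain b' where "b' \<noteq> b"
      by auto
    then show thesis
      by (rule that)
  qed
qed

lemma is_distr_mean_mix:
  assumes "\<And>s. 0 \<le> m s" "(\<Sum>s\<in>UNIV. m s) = 1" "is_strategy y"
  shows "is_distr (mean_mix m y)"
proof -
  have "(\<Sum>b\<in>UNIV. mean_mix m y b) = (\<Sum>s\<in>UNIV. m s * (\<Sum>b\<in>UNIV. y s b))"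
    unfolding mean_mix_def sum_distrib_left by (rule sum.swap)
  then show ?thesis
    using assms by (auto simp: is_distr_def mean_mix_def is_strategy_sum is_strategy_nonneg
        intro!: sum_nonneg mult_nonneg_nonneg)
qed

lemma sum_mean_mix_deviation:
  assumes "(\<Sum>s\<in>UNIV. m s) = 1"
  shows "(\<Sum>s\<in>UNIV. m s * (y s b - mean_mix m y b)) = 0"
  using assms by (simp add: mean_mix_def right_diff_distrib sum_subtractf flip: sum_distrib_right)

lemma abs_diff_le_spread: "\<bar>y s b - y t b\<bar> \<le> spread y"
proof -
  have "\<bar>y s b - y t b\<bar> \<le> (\<Sum>b\<in>UNIV. \<bar>y s b - y t b\<bar>)"
    by (rule member_le_sum) auto
  also have "\<dots> \<le> (\<Sum>t\<in>UNIV. \<Sum>b\<in>UNIV. \<bar>y s b - y t b\<bar>)"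
    by (rule member_le_sum[of t _ "\<lambda>t. \<Sum>b\<in>UNIV. \<bar>y s b - y t b\<bar>"]) (auto intro: sum_nonneg)
  also have "\<dots> \<le> spread y"
    unfolding spread_def
    by (rule member_le_sum[of s _ "\<lambda>s. \<Sum>t\<in>UNIV. \<Sum>b\<in>UNIV. \<bar>y s b - y t b\<bar>"])
       (auto intro: sum_nonneg)
  finally show ?thesis .
qed

lemma spread_pos_iff: "0 < spread y \<longleftrightarrow> (\<exists>s t. y s \<noteq> y t)"
proof
  assume "0 < spread y"
  show "\<exists>s t. y s \<noteq> y t"
  proof (rule ccontr)
    assume "\<not> ?thesis"
    then have const: "y s = y t" for s t
      by blast
    have "\<bar>y s b - y t b\<bar> = 0" for s t b
      using const[of s t] by simp
    then have "spread y = 0"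
      unfolding spread_def by (simp only: sum.neutral_const)
    with \<open>0 < spread y\<close> show False
      by simp
  qed
next
  assume "\<exists>s t. y s \<noteq> y t"
  then obtain s t b where "y s b \<noteq> y t b"
    by (auto simp: fun_eq_iff)
  then show "0 < spread y"
    using abs_diff_le_spread[of y s b t] by simp
qed

lemma abs_sub_mean_mix_le_spread:
  assumes "\<And>s. 0 \<le> m s" "(\<Sum>s\<in>UNIV. m s) = 1"
  shows "\<bar>y s b - mean_mix m y b\<bar> \<le> spread y"
proof -
  have "y s b - mean_mix m y b = (\<Sum>t\<in>UNIV. m t * (y s b - y t b))"
    using assms(2) by (simp add: mean_mix_def right_diff_distrib sum_subtractf flip: sum_distrib_right)
  also have "\<bar>\<dots>\<bar> \<le> (\<Sum>t\<in>UNIV. m t * spread y)"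
    using assms(1) abs_diff_le_spread[of y s b]
    by (intro order_trans[OF sum_abs sum_mono]) (simp add: abs_mult mult_left_mono)
  also have "\<dots> = spread y"
    using assms(2) by (simp flip: sum_distrib_right)
  finally show ?thesis .
qed

lemma tpow_nonneg: "stochastic p \<Longrightarrow> 0 \<le> tpow p n s t"
  by (induction n arbitrary: t) (auto simp: stochastic_def is_distr_def intro!: sum_nonneg)

lemma tpow_invariant:
  assumes "invariant_measure p m"
  shows "(\<Sum>s\<in>UNIV. m s * tpow p n s t) = m t"
proof (induction n arbitrary: t)
  case 0
  then show ?case by (simp add: if_distrib[of "\<lambda>x. _ * x"] cong: if_cong)
next
  case (Suc n)
  have "(\<Sum>s\<in>UNIV. m s * tpow p (Suc n) s t) = (\<Sum>s\<in>UNIV. \<Sum>r\<in>UNIV. m s * tpow p n s r * p r t)"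
    by (simp add: sum_distrib_left mult.assoc)
  also have "\<dots> = (\<Sum>r\<in>UNIV. (\<Sum>s\<in>UNIV. m s * tpow p n s r) * p r t)"
    by (subst sum.swap) (simp add: sum_distrib_right)
  also have "\<dots> = m t"
    using assms by (simp add: Suc invariant_measure_def)
  finally show ?case .
qed

lemma invariant_measure_pos:
  assumes "stochastic p" "irreducible_chain p" "invariant_measure p m"
  shows "0 < m t"
proof -
  have m_nonneg: "0 \<le> m s" for s
    using assms(3) by (simp add: invariant_measure_def is_distr_def)
  have "\<exists>s. 0 < m s"
  proof (rule ccontr)
    assume "\<not> ?thesis"
    then have "(\<Sum>s\<in>UNIV. m s) \<le> 0"
      by (simp add: sum_nonpos not_less)
    with assms(3) show False
      by (simp add: invariant_measure_def is_distr_def)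
  qed
  then obtain s where "0 < m s" ..
  moreover obtain n where "0 < tpow p n s t"
    using assms(2) by (auto simp: irreducible_chain_def)
  ultimately have "0 < m s * tpow p n s t"
    by simp
  also have "\<dots> \<le> (\<Sum>s\<in>UNIV. m s * tpow p n s t)"
    by (rule member_le_sum) (simp_all add: m_nonneg tpow_nonneg[OF assms(1)])
  also have "\<dots> = m t"
    using tpow_invariant[OF assms(3)] .
  finally show ?thesis .
qed

lemma Mset_nonneg: "\<mu> \<in> Mset m \<Longrightarrow> 0 \<le> \<mu> s a"
  by (simp add: Mset_def)

lemma Mset_row_sum: "\<mu> \<in> Mset m \<Longrightarrow> (\<Sum>a\<in>UNIV. \<mu> s a) = m s"
  by (simp add: Mset_def)

lemma Mset_column_sum: "\<mu> \<in> Mset m \<Longrightarrow> (\<Sum>s\<in>UNIV. \<mu> s a) = m a"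
  by (simp add: Mset_def)

text \<open>Both marginals of \<open>\<mu>\<close> are \<open>m\<close>, so a function of the state can be averaged either at the
  state or at the message.\<close>
lemma Mset_marginal_exchange:
  fixes g f :: "'s::finite \<Rightarrow> real"
  assumes "\<mu> \<in> Mset m"
  shows "(\<Sum>s\<in>UNIV. \<Sum>a\<in>UNIV. \<mu> s a * ((g s - g a) * f s))
       = (\<Sum>s\<in>UNIV. \<Sum>a\<in>UNIV. \<mu> s a * (g a * (f a - f s)))"
proof -
  have "(\<Sum>s\<in>UNIV. \<Sum>a\<in>UNIV. \<mu> s a * (g s * f s)) = (\<Sum>s\<in>UNIV. m s * (g s * f s))"
    by (simp add: sum_distrib_right[symmetric] Mset_row_sum[OF assms])
  also have "\<dots> = (\<Sum>a\<in>UNIV. \<Sum>s\<in>UNIV. \<mu> s a * (g a * f a))"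
    by (simp add: sum_distrib_right[symmetric] Mset_column_sum[OF assms])
  also have "\<dots> = (\<Sum>s\<in>UNIV. \<Sum>a\<in>UNIV. \<mu> s a * (g a * f a))"
    by (rule sum.swap)
  finally have diag: "(\<Sum>s\<in>UNIV. \<Sum>a\<in>UNIV. \<mu> s a * (g s * f s))
      = (\<Sum>s\<in>UNIV. \<Sum>a\<in>UNIV. \<mu> s a * (g a * f a))" .
  have "(\<Sum>s\<in>UNIV. \<Sum>a\<in>UNIV. \<mu> s a * ((g s - g a) * f s))
      = (\<Sum>s\<in>UNIV. \<Sum>a\<in>UNIV. \<mu> s a * (g s * f s)) - (\<Sum>s\<in>UNIV. \<Sum>a\<in>UNIV. \<mu> s a * (g a * f s))"
    by (simp add: left_diff_distrib right_diff_distrib sum_subtractf)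
  also have "\<dots> = (\<Sum>s\<in>UNIV. \<Sum>a\<in>UNIV. \<mu> s a * (g a * f a)) - (\<Sum>s\<in>UNIV. \<Sum>a\<in>UNIV. \<mu> s a * (g a * f s))"
    by (simp only: diag)
  also have "\<dots> = (\<Sum>s\<in>UNIV. \<Sum>a\<in>UNIV. \<mu> s a * (g a * (f a - f s)))"
    by (simp add: right_diff_distrib sum_subtractf)
  finally show ?thesis .
qed

lemma Mset_quadratic_identity:
  fixes g :: "'s::finite \<Rightarrow> real"
  assumes "\<mu> \<in> Mset m"
  shows "(\<Sum>s\<in>UNIV. \<Sum>a\<in>UNIV. \<mu> s a * ((g s - g a) * g s))
       = (\<Sum>s\<in>UNIV. \<Sum>a\<in>UNIV. \<mu> s a * (g s - g a)\<^sup>2) / 2"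
proof -
  have "(\<Sum>s\<in>UNIV. \<Sum>a\<in>UNIV. \<mu> s a * ((g s - g a) * g s))
      + (\<Sum>s\<in>UNIV. \<Sum>a\<in>UNIV. \<mu> s a * (g a * (g a - g s)))
      = (\<Sum>s\<in>UNIV. \<Sum>a\<in>UNIV. \<mu> s a * (g s - g a)\<^sup>2)"
    by (simp add: sum.distrib[symmetric] power2_eq_square algebra_simps)
  with Mset_marginal_exchange[OF assms, of g g] show ?thesis
    by simp
qed

lemma Mset_offdiagonal_pos:
  assumes "\<mu> \<in> Mset m" "\<mu> \<noteq> mu0 m"
  obtains s a where "s \<noteq> a" "0 < \<mu> s a"
proof -
  have "\<exists>s a. s \<noteq> a \<and> 0 < \<mu> s a"
  proof (rule ccontr)
    assume "\<not> ?thesis"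
    then have offdiag: "\<mu> s a = 0" if "s \<noteq> a" for s a
      using that Mset_nonneg[OF assms(1), of s a] by fastforce
    have "\<mu> s a = mu0 m s a" for s a
    proof (cases "s = a")
      case True
      have "m s = (\<Sum>a'\<in>UNIV. \<mu> s a')"
        using Mset_row_sum[OF assms(1)] by simp
      also have "\<dots> = (\<Sum>a'\<in>UNIV. if a' = s then \<mu> s s else 0)"
        by (rule sum.cong) (auto simp: offdiag)
      also have "\<dots> = \<mu> s s"
        by simp
      finally show ?thesis
        using True by (simp add: mu0_def)
    qed (simp add: offdiag mu0_def)
    with assms(2) show False
      by (auto simp: fun_eq_iff)
  qed
  with that show thesis
    by blast
qed

lemma Mset_dispersion_pos:
  fixes y :: "'s::finite \<Rightarrow> 'b::finite \<Rightarrow> real"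
  assumes "\<mu> \<in> Mset m" "\<mu> \<noteq> mu0 m" "inj y"
  shows "0 < (\<Sum>b\<in>UNIV. \<Sum>s\<in>UNIV. \<Sum>a\<in>UNIV. \<mu> s a * (y s b - y a b)\<^sup>2)"
proof -
  obtain s a where "s \<noteq> a" "0 < \<mu> s a"
    using Mset_offdiagonal_pos[OF assms(1,2)] .
  moreover obtain b where "y s b \<noteq> y a b"
    using \<open>s \<noteq> a\<close> assms(3) by (meson ext injD)
  ultimately have "0 < \<mu> s a * (y s b - y a b)\<^sup>2"
    by simp
  also have "\<dots> \<le> (\<Sum>a\<in>UNIV. \<mu> s a * (y s b - y a b)\<^sup>2)"
    by (rule member_le_sum) (auto intro!: mult_nonneg_nonneg Mset_nonneg[OF assms(1)])
  also have "\<dots> \<le> (\<Sum>s\<in>UNIV. \<Sum>a\<in>UNIV. \<mu> s a * (y s b - y a b)\<^sup>2)"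
    by (rule member_le_sum[of s _ "\<lambda>s. \<Sum>a\<in>UNIV. \<mu> s a * (y s b - y a b)\<^sup>2"])
       (auto intro!: sum_nonneg mult_nonneg_nonneg Mset_nonneg[OF assms(1)])
  also have "\<dots> \<le> (\<Sum>b\<in>UNIV. \<Sum>s\<in>UNIV. \<Sum>a\<in>UNIV. \<mu> s a * (y s b - y a b)\<^sup>2)"
    by (rule member_le_sum) (auto intro!: sum_nonneg mult_nonneg_nonneg Mset_nonneg[OF assms(1)])
  finally show ?thesis .
qed

section \<open>Payoffs\<close>

lemma sum_mu0_mult: "(\<Sum>a\<in>UNIV. mu0 m s a * f a) = m s * f s"
  by (simp add: mu0_def if_distrib[of "\<lambda>x. x * _"] cong: if_cong)

lemma fst_Upay: "fst (Upay u \<mu> y) = (\<Sum>s\<in>UNIV. \<Sum>a\<in>UNIV. \<mu> s a * (\<Sum>b\<in>UNIV. y a b * fst (u s b)))"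
  by (simp add: Upay_def mixed_payoff_def fst_sum)

lemma snd_Upay_mu0: "snd (Upay u (mu0 m) y) = receiver_value u m y"
  by (simp add: Upay_def mixed_payoff_def snd_sum sum_mu0_mult receiver_value_def)

lemma fst_Upay_mu0_minus:
  assumes "\<mu> \<in> Mset m"
  shows "fst (Upay u (mu0 m) y) - fst (Upay u \<mu> y) = sender_gap u \<mu> y"
proof -
  have "fst (Upay u (mu0 m) y) = (\<Sum>s\<in>UNIV. \<Sum>a\<in>UNIV. \<mu> s a * (\<Sum>b\<in>UNIV. y s b * fst (u s b)))"
    by (simp add: fst_Upay sum_mu0_mult sum_distrib_right[symmetric] Mset_row_sum[OF assms])
  then show ?thesis
    by (simp add: fst_Upay sender_gap_def left_diff_distrib right_diff_distrib sum_subtractf)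
qed

lemma C1_iff_sender_gap: "C1 u m y \<longleftrightarrow> (\<forall>\<mu>\<in>Mset m. 0 \<le> sender_gap u \<mu> y)"
  by (auto simp: C1_def simp flip: fst_Upay_mu0_minus)

lemma D1_iff_sender_gap: "D1 u m y \<longleftrightarrow> (\<forall>\<mu>\<in>Mset m. \<mu> \<noteq> mu0 m \<longrightarrow> 0 < sender_gap u \<mu> y)"
  by (auto simp: D1_def simp flip: fst_Upay_mu0_minus)

lemma C2_iff_receiver_value: "C2 u m y \<longleftrightarrow> v2 u m \<le> receiver_value u m y"
  by (simp add: C2_def snd_Upay_mu0)

lemma D2_iff_receiver_value: "D2 u m y \<longleftrightarrow> v2 u m < receiver_value u m y"
  by (simp add: D2_def snd_Upay_mu0)

lemma v2_eq_Max_pooled_payoff: "v2 u m = Max (range (pooled_payoff u m))"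
  by (simp add: v2_def pooled_payoff_def)

lemma pooled_payoff_le_v2: "pooled_payoff u m b \<le> v2 u m"
  by (simp add: v2_eq_Max_pooled_payoff)

lemma v2_attained: "\<exists>b. pooled_payoff u m b = v2 u m"
proof -
  have "v2 u m \<in> range (pooled_payoff u m)"
    unfolding v2_eq_Max_pooled_payoff by (rule Max_in) auto
  then show ?thesis by auto
qed

lemma sender_gap_combination:
  assumes "\<And>s a b. h s b - h a b = \<alpha> * (y s b - y a b) + \<beta> * (z s b - z a b)"
  shows "sender_gap u \<mu> h = \<alpha> * sender_gap u \<mu> y + \<beta> * sender_gap u \<mu> z"
  unfolding sender_gap_def assms
  by (simp only: distrib_right mult.assoc sum.distrib sum_distrib_left distrib_left mult.left_commute)

lemma sender_gap_scaled:
  assumes "\<And>s a b. h s b - h a b = c * (y s b - y a b)"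
  shows "sender_gap u \<mu> h = c * sender_gap u \<mu> y"
  using sender_gap_combination[where \<beta> = 0 and z = y, of h c y u \<mu>] assms by simp

lemma sender_gap_add_game:
  "sender_gap (\<lambda>s b. u s b + c *\<^sub>R v s b) \<mu> y = sender_gap u \<mu> y + c * sender_gap v \<mu> y"
  unfolding sender_gap_def
  by (simp only: fst_add fst_scaleR real_scaleR_def distrib_left sum.distrib sum_distrib_left mult.left_commute)

lemma sender_gap_rank_one:
  "sender_gap u \<mu> (\<lambda>s b. \<tau> s * d b)
     = (\<Sum>s\<in>UNIV. \<Sum>a\<in>UNIV. \<mu> s a * ((\<tau> s - \<tau> a) * (\<Sum>b\<in>UNIV. d b * fst (u s b))))"
  unfolding sender_gap_def
  by (simp add: left_diff_distrib[symmetric] sum_distrib_left mult.assoc)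

lemma sender_gap_own_payoff:
  fixes y :: "'s::finite \<Rightarrow> 'b::finite \<Rightarrow> real"
  assumes "\<mu> \<in> Mset m"
  shows "sender_gap (\<lambda>s b. (y s b, q s b)) \<mu> y
       = (\<Sum>b\<in>UNIV. \<Sum>s\<in>UNIV. \<Sum>a\<in>UNIV. \<mu> s a * (y s b - y a b)\<^sup>2) / 2"
proof -
  have "sender_gap (\<lambda>s b. (y s b, q s b)) \<mu> y
      = (\<Sum>b\<in>UNIV. \<Sum>s\<in>UNIV. \<Sum>a\<in>UNIV. \<mu> s a * ((y s b - y a b) * y s b))"
  proof -
    have "sender_gap (\<lambda>s b. (y s b, q s b)) \<mu> y
        = (\<Sum>s\<in>UNIV. \<Sum>a\<in>UNIV. \<Sum>b\<in>UNIV. \<mu> s a * ((y s b - y a b) * y s b))"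
      by (simp add: sender_gap_def sum_distrib_left)
    also have "\<dots> = (\<Sum>s\<in>UNIV. \<Sum>b\<in>UNIV. \<Sum>a\<in>UNIV. \<mu> s a * ((y s b - y a b) * y s b))"
      by (rule sum.cong[OF refl], rule sum.swap)
    also have "\<dots> = (\<Sum>b\<in>UNIV. \<Sum>s\<in>UNIV. \<Sum>a\<in>UNIV. \<mu> s a * ((y s b - y a b) * y s b))"
      by (rule sum.swap)
    finally show ?thesis .
  qed
  then show ?thesis
    by (simp only: Mset_quadratic_identity[OF assms, of "\<lambda>s. y s _"] sum_divide_distrib)
qed

lemma receiver_value_add_game:
  "receiver_value (\<lambda>s b. u s b + c *\<^sub>R v s b) m y = receiver_value u m y + c * receiver_value v m y"
  by (simp add: receiver_value_def algebra_simps sum.distrib sum_distrib_left)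

lemma receiver_value_add_scaled:
  "receiver_value u m (\<lambda>s b. y s b + c * z s b) = receiver_value u m y + c * receiver_value u m z"
  by (simp add: receiver_value_def algebra_simps sum.distrib sum_distrib_left)

lemma receiver_value_diff:
  "receiver_value u m (\<lambda>s b. y s b - z s b) = receiver_value u m y - receiver_value u m z"
  by (simp add: receiver_value_def algebra_simps sum_subtractf)

lemma receiver_value_pooling: "receiver_value u m (\<lambda>_. q) = (\<Sum>b\<in>UNIV. q b * pooled_payoff u m b)"
proof -
  have "receiver_value u m (\<lambda>_. q) = (\<Sum>s\<in>UNIV. \<Sum>b\<in>UNIV. q b * (m s * snd (u s b)))"
    by (simp add: receiver_value_def sum_distrib_left mult_ac)
  also have "\<dots> = (\<Sum>b\<in>UNIV. q b * pooled_payoff u m b)"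
    by (subst sum.swap) (simp add: pooled_payoff_def sum_distrib_left)
  finally show ?thesis .
qed

lemma pooled_payoff_add_game:
  "pooled_payoff (\<lambda>s b. u s b + c *\<^sub>R v s b) m = (\<lambda>b. pooled_payoff u m b + c * pooled_payoff v m b)"
  by (simp add: pooled_payoff_def algebra_simps sum.distrib sum_distrib_left fun_eq_iff)

lemma abs_receiver_value_le:
  assumes "\<And>s. 0 \<le> m s" and "\<And>s b. \<bar>y s b\<bar> \<le> \<delta>"
  shows "\<bar>receiver_value u m y\<bar> \<le> \<delta> * receiver_payoff_size u m"
proof -
  have "\<bar>receiver_value u m y\<bar> \<le> (\<Sum>s\<in>UNIV. m s * (\<Sum>b\<in>UNIV. \<bar>y s b\<bar> * \<bar>snd (u s b)\<bar>))"
    unfolding receiver_value_def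
    by (rule order_trans[OF sum_abs sum_mono])
       (auto simp: abs_mult assms(1) intro!: mult_left_mono order_trans[OF sum_abs] sum_mono)
  also have "\<dots> \<le> (\<Sum>s\<in>UNIV. m s * (\<Sum>b\<in>UNIV. \<delta> * \<bar>snd (u s b)\<bar>))"
    by (intro sum_mono mult_left_mono mult_right_mono assms) auto
  finally show ?thesis
    by (simp add: receiver_payoff_size_def sum_distrib_left mult.left_commute)
qed

lemma receiver_value_ge_close:
  assumes "\<And>s. 0 \<le> m s" "\<And>s b. \<bar>y' s b - y s b\<bar> \<le> \<delta>"
  shows "receiver_value u m y - \<delta> * receiver_payoff_size u m \<le> receiver_value u m y'"
proof -
  have "\<bar>receiver_value u m (\<lambda>s b. y s b - y' s b)\<bar> \<le> \<delta> * receiver_payoff_size u m"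
    using assms by (intro abs_receiver_value_le) (auto simp: abs_minus_commute)
  then show ?thesis
    by (simp add: receiver_value_diff abs_le_iff)
qed

section \<open>Perturbing a game with condition B\<close>

text \<open>Adding to \<open>\<kappa>\<close> an injective function smaller than the least nonzero gap of \<open>\<kappa>\<close> makes it
  injective, and the quadratic term of \<open>Mset_quadratic_identity\<close> absorbs the perturbation.\<close>
lemma exists_inj_aligned_with:
  fixes \<kappa> :: "'s::finite \<Rightarrow> real"
  obtains \<tau> where "inj \<tau>" "\<And>\<mu>. \<mu> \<in> Mset m \<Longrightarrow> 0 \<le> (\<Sum>s\<in>UNIV. \<Sum>a\<in>UNIV. \<mu> s a * ((\<tau> s - \<tau> a) * \<kappa> s))"
proof -
  obtain \<gamma> where "0 < \<gamma>"
    and \<gamma>': "\<And>x. (\<lambda>(s, a). \<kappa> s - \<kappa> a) x \<noteq> 0 \<Longrightarrow> \<gamma> \<le> \<bar>(\<lambda>(s, a). \<kappa> s - \<kappa> a) x\<bar>"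
    using finite_nonzero_abs_lower_bound[of "\<lambda>(s, a). \<kappa> s - \<kappa> a"] by blast
  have \<gamma>: "0 < \<gamma>" "\<And>s a. \<kappa> s - \<kappa> a \<noteq> 0 \<Longrightarrow> \<gamma> \<le> \<bar>\<kappa> s - \<kappa> a\<bar>"
    using \<open>0 < \<gamma>\<close> \<gamma>'[of "(_, _)"] by auto
  obtain r :: "'s \<Rightarrow> real" where r: "inj r" "\<And>s. 0 \<le> r s \<and> r s < 1"
    using exists_inj_unit_interval by blast
  define \<tau> where "\<tau> s = \<kappa> s + \<gamma> / 2 * r s" for s
  have "inj \<tau>"
  proof (rule injI)
    fix s a
    assume "\<tau> s = \<tau> a"
    then have gap: "\<kappa> s - \<kappa> a = \<gamma> / 2 * (r a - r s)"
      by (simp add: \<tau>_def algebra_simps)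
    have "\<bar>\<kappa> s - \<kappa> a\<bar> < \<gamma>"
      unfolding gap using \<gamma>(1) r(2)[of a] r(2)[of s] by (simp add: abs_mult abs_less_iff)
    then have "\<kappa> s = \<kappa> a"
      using \<gamma>(2)[of s a] by fastforce
    with gap \<gamma>(1) have "r s = r a"
      by simp
    then show "s = a"
      using r(1) by (simp add: inj_eq)
  qed
  moreover have "0 \<le> (\<Sum>s\<in>UNIV. \<Sum>a\<in>UNIV. \<mu> s a * ((\<tau> s - \<tau> a) * \<kappa> s))" if \<mu>: "\<mu> \<in> Mset m" for \<mu>
  proof -
    have "(\<Sum>s\<in>UNIV. \<Sum>a\<in>UNIV. \<mu> s a * ((\<tau> s - \<tau> a) * \<kappa> s))
        = (\<Sum>s\<in>UNIV. \<Sum>a\<in>UNIV. \<mu> s a * ((\<kappa> s - \<kappa> a) * \<kappa> s)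
            + \<gamma> / 2 * (\<mu> s a * ((r s - r a) * \<kappa> s)))"
      by (intro sum.cong refl) (simp add: \<tau>_def algebra_simps)
    also have "\<dots> = (\<Sum>s\<in>UNIV. \<Sum>a\<in>UNIV. \<mu> s a * ((\<kappa> s - \<kappa> a) * \<kappa> s))
        + \<gamma> / 2 * (\<Sum>s\<in>UNIV. \<Sum>a\<in>UNIV. \<mu> s a * ((r s - r a) * \<kappa> s))"
      by (simp add: sum.distrib sum_distrib_left)
    also have "\<dots> = (\<Sum>s\<in>UNIV. \<Sum>a\<in>UNIV. \<mu> s a * (\<kappa> s - \<kappa> a)\<^sup>2) / 2
        + \<gamma> / 2 * (\<Sum>s\<in>UNIV. \<Sum>a\<in>UNIV. \<mu> s a * (r a * (\<kappa> a - \<kappa> s)))"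
      using Mset_quadratic_identity[OF \<mu>, of \<kappa>] Mset_marginal_exchange[OF \<mu>, of r \<kappa>] by simp
    also have "\<dots> = (\<Sum>s\<in>UNIV. \<Sum>a\<in>UNIV. \<mu> s a * (\<kappa> s - \<kappa> a)\<^sup>2 / 2
        + \<gamma> / 2 * (\<mu> s a * (r a * (\<kappa> a - \<kappa> s))))"
      by (simp add: sum.distrib sum_distrib_left sum_divide_distrib)
    also have "\<dots> = (\<Sum>s\<in>UNIV. \<Sum>a\<in>UNIV. \<mu> s a * ((\<kappa> s - \<kappa> a)\<^sup>2 / 2 - \<gamma> / 2 * (r a * (\<kappa> s - \<kappa> a))))"
      by (intro sum.cong refl) (simp add: algebra_simps)
    also have "\<dots> \<ge> 0"
      using \<gamma> r(2) by (intro sum_nonneg mult_nonneg_nonneg Mset_nonneg[OF \<mu>]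
          quadratic_dominates_small_shift) auto
    finally show ?thesis .
  qed
  ultimately show thesis
    using that by blast
qed

lemma exists_inj_balanced_direction:
  fixes u :: "('s::finite, 'b::finite) game" and b1 b2 :: 'b
  assumes "b1 \<noteq> b2"
  obtains v where "inj v" "\<And>s. (\<Sum>b\<in>UNIV. v s b) = 0" "\<And>\<mu>. \<mu> \<in> Mset m \<Longrightarrow> 0 \<le> sender_gap u \<mu> v"
proof -
  define d :: "'b \<Rightarrow> real" where "d b = (if b = b1 then 1 else 0) - (if b = b2 then 1 else 0)" for b
  obtain \<tau> where \<tau>: "inj \<tau>"
    "\<And>\<mu>. \<mu> \<in> Mset m \<Longrightarrow> 0 \<le> (\<Sum>s\<in>UNIV. \<Sum>a\<in>UNIV. \<mu> s a * ((\<tau> s - \<tau> a) * (\<Sum>b\<in>UNIV. d b * fst (u s b))))"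
    using exists_inj_aligned_with[where \<kappa> = "\<lambda>s. \<Sum>b\<in>UNIV. d b * fst (u s b)" and m = m] by blast
  show thesis
  proof
    show "inj (\<lambda>s b. \<tau> s * d b)"
      using \<tau>(1) assms by (auto simp: inj_def fun_eq_iff d_def dest: spec[of _ b1])
    show "(\<Sum>b\<in>UNIV. \<tau> s * d b) = 0" for s
      by (simp add: d_def sum_subtractf flip: sum_distrib_left)
    show "0 \<le> sender_gap u \<mu> (\<lambda>s b. \<tau> s * d b)" if "\<mu> \<in> Mset m" for \<mu>
      using \<tau>(2)[OF that] by (simp add: sender_gap_rank_one)
  qed
qed

lemma mix_uniform_perturbation:
  fixes y v :: "'s \<Rightarrow> 'b::finite \<Rightarrow> real"
  assumes y: "is_strategy y" and \<rho>: "0 < \<rho>" "\<rho> \<le> 1"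
    and v: "\<And>s. (\<Sum>b\<in>UNIV. v s b) = 0" "\<And>s b. \<bar>v s b\<bar> \<le> \<rho> / (2 * CARD('b))"
  defines "y' \<equiv> \<lambda>s b. (1 - \<rho>) * y s b + \<rho> / CARD('b) + v s b"
  shows "is_strategy y'" and "\<And>s b. \<bar>y' s b - y s b\<bar> \<le> 3 * \<rho>"
proof -
  have card: "(1::real) \<le> CARD('b)"
    by (simp add: Suc_le_eq)
  have pos: "0 < y' s b" for s b
  proof -
    have "\<rho> / (2 * CARD('b)) < \<rho> / CARD('b)"
      using \<rho>(1) card by (simp add: field_simps)
    moreover have "0 \<le> (1 - \<rho>) * y s b"
      using \<rho>(2) is_strategy_nonneg[OF y] by simp
    ultimately show ?thesis
      using v(2)[of s b] unfolding y'_def abs_le_iff by linarith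
  qed
  have "(\<Sum>b\<in>UNIV. y' s b) = 1" for s
    using card by (simp add: y'_def sum.distrib v(1) is_strategy_sum[OF y] flip: sum_distrib_left)
  with pos show "is_strategy y'"
    by (simp add: is_strategy_def is_distr_def less_imp_le)
  show "\<bar>y' s b - y s b\<bar> \<le> 3 * \<rho>" for s b
  proof -
    have "\<bar>\<rho> * y s b\<bar> \<le> \<rho>"
      using \<rho>(1) is_strategy_nonneg[OF y] is_strategy_le_1[OF y] by (simp add: abs_mult mult_left_le)
    moreover have "\<rho> / CARD('b) \<le> \<rho>"
      using \<rho>(1) card by (simp add: divide_le_eq mult_le_cancel_left1)
    moreover have "\<rho> / (2 * CARD('b)) \<le> \<rho> / CARD('b)"
      using \<rho>(1) card by (intro divide_left_mono) auto
    moreover have "y' s b - y s b = - (\<rho> * y s b) + \<rho> / CARD('b) + v s b"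
      by (simp add: y'_def algebra_simps)
    ultimately show ?thesis
      using v(2)[of s b] unfolding abs_le_iff by linarith
  qed
qed

lemma inj_mix_uniform_perturbation:
  fixes y v :: "'s \<Rightarrow> 'b::finite \<Rightarrow> real"
  assumes "inj v" "\<rho> \<le> 1 / 2"
    and \<gamma>: "\<And>s a b. y s b \<noteq> y a b \<Longrightarrow> \<gamma> \<le> \<bar>y s b - y a b\<bar>" and v: "\<And>s b. \<bar>v s b\<bar> < \<gamma> / 4"
  shows "inj (\<lambda>s b. (1 - \<rho>) * y s b + \<rho> / CARD('b) + v s b)"
proof (rule inj_add_small_perturbation[OF assms(1)])
  have "0 < \<gamma>"
    using v[of undefined undefined] by linarith
  then have half: "\<gamma> / 2 \<le> (1 - \<rho>) * \<gamma>"
    using mult_right_mono[of "1 / 2" "1 - \<rho>" \<gamma>] assms(2) by simp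
  show "(1 - \<rho>) * \<gamma> \<le> \<bar>(1 - \<rho>) * y s b + \<rho> / CARD('b) - ((1 - \<rho>) * y a b + \<rho> / CARD('b))\<bar>"
    if "(1 - \<rho>) * y s b + \<rho> / CARD('b) \<noteq> (1 - \<rho>) * y a b + \<rho> / CARD('b)" for s a b
    using that \<gamma>[of s b a] assms(2)
    by (auto simp: right_diff_distrib[symmetric] abs_mult intro: mult_left_mono)
  show "\<bar>v s b - v a b\<bar> < (1 - \<rho>) * \<gamma>" for s a b
    using abs_triangle_ineq4[of "v s b" "v a b"] v[of s b] v[of a b] half by linarith
qed

lemma exists_inj_strategy_nearby:
  fixes u :: "('s::finite, 'b::finite) game" and y :: "'s \<Rightarrow> 'b \<Rightarrow> real" and b1 b2 :: 'b
  assumes "b1 \<noteq> b2" and y: "is_strategy y" "\<And>\<mu>. \<mu> \<in> Mset m \<Longrightarrow> 0 \<le> sender_gap u \<mu> y"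
    and "0 < \<delta>"
  obtains y' where "is_strategy y'" "inj y'" "\<And>\<mu>. \<mu> \<in> Mset m \<Longrightarrow> 0 \<le> sender_gap u \<mu> y'"
    "\<And>s b. \<bar>y' s b - y s b\<bar> \<le> \<delta>"
proof -
  obtain v where v: "inj v" "\<And>s. (\<Sum>b\<in>UNIV. v s b) = 0" "\<And>\<mu>. \<mu> \<in> Mset m \<Longrightarrow> 0 \<le> sender_gap u \<mu> v"
    using exists_inj_balanced_direction[OF assms(1), where u = u and m = m] by blast
  obtain \<gamma> where "0 < \<gamma>"
    and \<gamma>': "\<forall>x. (\<lambda>(s, a, b). y s b - y a b) x \<noteq> 0 \<longrightarrow> \<gamma> \<le> \<bar>(\<lambda>(s, a, b). y s b - y a b) x\<bar>"
    using finite_nonzero_abs_lower_bound[of "\<lambda>(s, a, b). y s b - y a b"] by blast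
  have \<gamma>: "\<gamma> \<le> \<bar>y s b - y a b\<bar>" if "y s b \<noteq> y a b" for s a b
    using that \<gamma>'[rule_format, of "(s, a, b)"] by simp
  define R where "R = (\<Sum>s\<in>UNIV. \<Sum>b\<in>UNIV. \<bar>v s b\<bar>)"
  define \<rho> where "\<rho> = min (1 / 2) (\<delta> / 3)"
  define e where "e = min (\<rho> / (2 * CARD('b))) (\<gamma> / 4)"
  define \<eta> where "\<eta> = e / (R + 1)"
  have R: "\<bar>v s b\<bar> \<le> R" for s b
    unfolding R_def by (rule abs_le_double_sum_abs)
  have "0 < \<rho>" "\<rho> \<le> 1 / 2" "3 * \<rho> \<le> \<delta>"
    using \<open>0 < \<delta>\<close> by (auto simp: \<rho>_def)
  have "0 < e" "0 < \<eta>"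
    using \<open>0 < \<rho>\<close> \<open>0 < \<gamma>\<close> R[of undefined undefined] by (auto simp: e_def \<eta>_def)
  have small: "\<bar>\<eta> * v s b\<bar> < e" for s b
  proof -
    have "\<bar>\<eta> * v s b\<bar> \<le> \<eta> * R"
      using \<open>0 < \<eta>\<close> R[of s b] by (simp add: abs_mult mult_left_mono)
    also have "\<dots> < e"
      using \<open>0 < e\<close> R[of s b] by (simp add: \<eta>_def field_simps)
    finally show ?thesis .
  qed
  define y' where "y' = (\<lambda>s b. (1 - \<rho>) * y s b + \<rho> / CARD('b) + \<eta> * v s b)"
  have "(\<Sum>b\<in>UNIV. \<eta> * v s b) = 0" for s
    by (simp add: v(2) flip: sum_distrib_left)
  moreover have "\<bar>\<eta> * v s b\<bar> \<le> \<rho> / (2 * CARD('b))" "\<bar>\<eta> * v s b\<bar> < \<gamma> / 4" for s b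
    using small[of s b] by (simp_all add: e_def)
  ultimately have mix: "is_strategy y'" "\<And>s b. \<bar>y' s b - y s b\<bar> \<le> 3 * \<rho>"
    using mix_uniform_perturbation[OF y(1) \<open>0 < \<rho>\<close>, of "\<lambda>s b. \<eta> * v s b"] \<open>\<rho> \<le> 1 / 2\<close>
    by (simp_all add: y'_def)
  show thesis
  proof (rule that)
    show "is_strategy y'"
      using mix(1) .
    show "\<bar>y' s b - y s b\<bar> \<le> \<delta>" for s b
      using mix(2)[of s b] \<open>3 * \<rho> \<le> \<delta>\<close> by linarith
    show "inj y'"
      unfolding y'_def using v(1) \<open>0 < \<eta>\<close> \<open>\<rho> \<le> 1 / 2\<close> \<gamma> \<open>\<bar>\<eta> * v _ _\<bar> < \<gamma> / 4\<close>
      by (intro inj_mix_uniform_perturbation) (auto simp: inj_def fun_eq_iff)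
    show "0 \<le> sender_gap u \<mu> y'" if "\<mu> \<in> Mset m" for \<mu>
    proof -
      have "sender_gap u \<mu> y' = (1 - \<rho>) * sender_gap u \<mu> y + \<eta> * sender_gap u \<mu> v"
        by (rule sender_gap_combination) (simp add: y'_def algebra_simps)
      then show ?thesis
        using y(2)[OF that] v(3)[OF that] \<open>\<rho> \<le> 1 / 2\<close> \<open>0 < \<eta>\<close> by simp
    qed
  qed
qed

lemma D1_own_payoff_perturbation:
  assumes "inj y" "\<And>\<mu>. \<mu> \<in> Mset m \<Longrightarrow> 0 \<le> sender_gap u \<mu> y" "0 < \<epsilon>"
  shows "D1 (\<lambda>s b. u s b + \<epsilon> *\<^sub>R (y s b, q s b)) m y"
  unfolding D1_iff_sender_gap sender_gap_add_game
proof (intro ballI impI)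
  fix \<mu>
  assume "\<mu> \<in> Mset m" "\<mu> \<noteq> mu0 m"
  then have "0 < sender_gap (\<lambda>s b. (y s b, q s b)) \<mu> y"
    using Mset_dispersion_pos[OF _ _ assms(1)] by (simp add: sender_gap_own_payoff)
  then show "0 < sender_gap u \<mu> y + \<epsilon> * sender_gap (\<lambda>s b. (y s b, q s b)) \<mu> y"
    using assms(2)[OF \<open>\<mu> \<in> Mset m\<close>] assms(3) by (simp add: add_nonneg_pos)
qed

lemma receiver_value_centered_pos:
  fixes y :: "'s::finite \<Rightarrow> 'b::finite \<Rightarrow> real"
  assumes m: "\<And>s. 0 < m s" "(\<Sum>s\<in>UNIV. m s) = 1" and "y s0 \<noteq> y t0"
  shows "0 < receiver_value (\<lambda>s b. (p s b, y s b - mean_mix m y b)) m y"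
proof -
  let ?z = "mean_mix m y" and ?Q = "\<lambda>s b. (p s b, y s b - mean_mix m y b)"
  have "receiver_value ?Q m (\<lambda>_. ?z) = 0"
    by (simp add: receiver_value_pooling pooled_payoff_def sum_mean_mix_deviation[OF m(2), of y])
  then have "receiver_value ?Q m y = receiver_value ?Q m (\<lambda>s b. y s b - ?z b)"
    by (simp add: receiver_value_diff)
  also have "\<dots> = (\<Sum>s\<in>UNIV. m s * (\<Sum>b\<in>UNIV. (y s b - ?z b)\<^sup>2))"
    by (simp add: receiver_value_def power2_eq_square)
  also have "\<dots> > 0"
  proof -
    obtain s where "y s \<noteq> ?z"
      using assms(3) by metis
    then obtain b where "y s b \<noteq> ?z b"
      by auto
    then have "0 < (y s b - ?z b)\<^sup>2"
      by simp
    also have "\<dots> \<le> (\<Sum>b\<in>UNIV. (y s b - ?z b)\<^sup>2)"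
      by (rule member_le_sum) auto
    finally have "0 < m s * (\<Sum>b\<in>UNIV. (y s b - ?z b)\<^sup>2)"
      using m(1) by simp
    also have "\<dots> \<le> (\<Sum>s\<in>UNIV. m s * (\<Sum>b\<in>UNIV. (y s b - ?z b)\<^sup>2))"
      by (rule member_le_sum) (auto intro!: mult_nonneg_nonneg sum_nonneg less_imp_le[OF m(1)])
    finally show ?thesis .
  qed
  finally show ?thesis .
qed

lemma D2_centered_perturbation:
  fixes u :: "('s::finite, 'b::finite) game"
  assumes m: "\<And>s. 0 \<le> m s" "(\<Sum>s\<in>UNIV. m s) = 1"
    and "C2 u m y" and "\<And>s b. \<bar>y' s b - y s b\<bar> \<le> \<delta>" and "0 \<le> \<epsilon>"
  defines "Q \<equiv> \<lambda>s b. (0, y s b - mean_mix m y b)"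
  assumes small: "\<delta> * (receiver_payoff_size u m + \<epsilon> * receiver_payoff_size Q m) < \<epsilon> * receiver_value Q m y"
  shows "D2 (\<lambda>s b. u s b + \<epsilon> *\<^sub>R (p s b, y s b - mean_mix m y b)) m y'"
proof -
  let ?P = "\<lambda>s b. (p s b, y s b - mean_mix m y b)"
  have same_snd: "receiver_value ?P = receiver_value Q" "receiver_payoff_size ?P = receiver_payoff_size Q"
    by (simp_all add: Q_def receiver_value_def receiver_payoff_size_def fun_eq_iff)
  have "pooled_payoff ?P m = (\<lambda>b. 0)"
    by (simp add: pooled_payoff_def fun_eq_iff sum_mean_mix_deviation[OF m(2), of y])
  then have v2_eq: "v2 (\<lambda>s b. u s b + \<epsilon> *\<^sub>R ?P s b) m = v2 u m"
    unfolding v2_eq_Max_pooled_payoff pooled_payoff_add_game by simp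
  have "receiver_value u m y - \<delta> * receiver_payoff_size u m \<le> receiver_value u m y'"
    by (rule receiver_value_ge_close[OF m(1) assms(4)])
  moreover have "\<epsilon> * (receiver_value Q m y - \<delta> * receiver_payoff_size Q m) \<le> \<epsilon> * receiver_value Q m y'"
    by (rule mult_left_mono[OF receiver_value_ge_close[OF m(1) assms(4)] \<open>0 \<le> \<epsilon>\<close>])
  moreover have "v2 u m \<le> receiver_value u m y"
    using \<open>C2 u m y\<close> by (simp add: C2_iff_receiver_value)
  ultimately have "v2 u m < receiver_value u m y' + \<epsilon> * receiver_value Q m y'"
    using small by (simp add: algebra_simps)
  then show ?thesis
    unfolding D2_iff_receiver_value v2_eq receiver_value_add_game same_snd .
qed

lemma norm_strategy_deviation_le:
  assumes "is_strategy y'" "is_strategy y" "is_distr q"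
  shows "norm (y' s b, y s b - q b) \<le> 2"
proof -
  have "0 \<le> q b" "q b \<le> 1"
    using assms(3) is_strategy_nonneg[of "\<lambda>_. q"] is_strategy_le_1[of "\<lambda>_. q"]
    by (auto simp: is_strategy_def)
  then have "\<bar>y' s b\<bar> + \<bar>y s b - q b\<bar> \<le> 2"
    using is_strategy_nonneg[OF assms(1), of s b] is_strategy_le_1[OF assms(1), of s b]
      is_strategy_nonneg[OF assms(2), of s b] is_strategy_le_1[OF assms(2), of s b]
    unfolding abs_le_iff by linarith
  then show ?thesis
    using norm_Pair_le[of "y' s b" "y s b - q b"] by simp
qed

lemma exists_perturbation_with_Ehat:
  fixes G :: "('s::finite, 'b::finite) game"
  assumes m: "\<And>s. 0 < m s" "(\<Sum>s\<in>UNIV. m s) = 1" and "conditionB G m" and "0 < \<epsilon>"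
  shows "\<exists>P. (\<forall>s b. norm (P s b) \<le> 2) \<and> (\<lambda>s b. G s b + \<epsilon> *\<^sub>R P s b) \<in> {G'. Ehat G' m \<noteq> {}}"
proof -
  obtain y s0 t0 where y: "is_strategy y" "y s0 \<noteq> y t0" "C1 G m y" "C2 G m y"
    using assms(3) by (auto simp: conditionB_def)
  obtain b1 b2 :: 'b where "b1 \<noteq> b2"
    using is_strategy_nonconstant_two_actions[OF y(1,2)] .
  have m_nonneg: "0 \<le> m s" for s
    using m(1) less_imp_le by blast
  define Q where "Q = (\<lambda>s b. (0::real, y s b - mean_mix m y b))"
  have "0 < receiver_value Q m y"
    unfolding Q_def using receiver_value_centered_pos[OF m y(2)] .
  define K where "K = receiver_payoff_size G m + \<epsilon> * receiver_payoff_size Q m"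
  have "0 \<le> K"
    using \<open>0 < \<epsilon>\<close> m_nonneg
    by (auto simp: K_def receiver_payoff_size_def intro!: add_nonneg_nonneg sum_nonneg mult_nonneg_nonneg)
  define \<delta> where "\<delta> = \<epsilon> * receiver_value Q m y / (2 * K + 1)"
  have V: "0 < \<epsilon> * receiver_value Q m y"
    using \<open>0 < \<epsilon>\<close> \<open>0 < receiver_value Q m y\<close> by simp
  have "0 < \<delta>" "\<delta> * K < \<epsilon> * receiver_value Q m y"
    using V \<open>0 \<le> K\<close> by (simp_all add: \<delta>_def field_simps add_pos_nonneg)
  obtain y' where y': "is_strategy y'" "inj y'" "\<And>\<mu>. \<mu> \<in> Mset m \<Longrightarrow> 0 \<le> sender_gap G \<mu> y'"
    "\<And>s b. \<bar>y' s b - y s b\<bar> \<le> \<delta>"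
    using exists_inj_strategy_nearby[OF \<open>b1 \<noteq> b2\<close> y(1) _ \<open>0 < \<delta>\<close>] y(3)
    unfolding C1_iff_sender_gap by blast
  define P where "P s b = (y' s b, y s b - mean_mix m y b)" for s b
  show ?thesis
  proof (intro exI conjI allI)
    show "norm (P s b) \<le> 2" for s b
      unfolding P_def by (rule norm_strategy_deviation_le[OF y'(1) y(1) is_distr_mean_mix[OF m_nonneg m(2) y(1)]])
    have "D1 (\<lambda>s b. G s b + \<epsilon> *\<^sub>R P s b) m y'"
      unfolding P_def by (rule D1_own_payoff_perturbation[OF y'(2,3) \<open>0 < \<epsilon>\<close>])
    moreover have "D2 (\<lambda>s b. G s b + \<epsilon> *\<^sub>R P s b) m y'"
      unfolding P_def using \<open>\<delta> * K < _\<close> \<open>0 < \<epsilon>\<close>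
      by (intro D2_centered_perturbation[OF m_nonneg m(2) y(4) y'(4)]) (auto simp: K_def Q_def)
    ultimately have "Upay (\<lambda>s b. G s b + \<epsilon> *\<^sub>R P s b) (mu0 m) y' \<in> Ehat (\<lambda>s b. G s b + \<epsilon> *\<^sub>R P s b) m"
      using y'(1) unfolding Ehat_def by blast
    then show "(\<lambda>s b. G s b + \<epsilon> *\<^sub>R P s b) \<in> {G'. Ehat G' m \<noteq> {}}"
      by blast
  qed
qed

section \<open>Closedness of condition B\<close>

text \<open>Condition B amounts to a nonconstant admissible direction for the set \<open>A\<close> of prior best
  replies; admissibility, unlike the nonconstancy of a witness, survives normalization and limits.\<close>
definition admissible_direction ::
    "('s::finite, 'b::finite) game \<Rightarrow> ('s \<Rightarrow> real) \<Rightarrow> 'b set \<Rightarrow> ('s \<Rightarrow> 'b \<Rightarrow> real) \<Rightarrow> bool" where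
  "admissible_direction u m A h \<longleftrightarrow> (\<forall>s. (\<Sum>b\<in>UNIV. h s b) = 0) \<and> (\<forall>s. \<forall>b. b \<notin> A \<longrightarrow> 0 \<le> h s b)
     \<and> (\<forall>\<mu>\<in>Mset m. 0 \<le> sender_gap u \<mu> h) \<and> 0 \<le> receiver_value u m h"

lemma receiver_value_uniform_on_argmax:
  fixes u :: "('s::finite, 'b::finite) game"
  assumes "A = {b. pooled_payoff u m b = v2 u m}"
  shows "receiver_value u m (\<lambda>_ b. if b \<in> A then 1 / card A else 0) = v2 u m"
proof -
  have "A \<noteq> {}"
    using v2_attained[of u m] assms by auto
  have "receiver_value u m (\<lambda>_ b. if b \<in> A then 1 / card A else 0) = (\<Sum>b\<in>A. v2 u m / card A)"
    by (simp add: receiver_value_pooling if_distrib[of "\<lambda>x. x * _"] sum.If_cases assms)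
  also have "\<dots> = v2 u m"
    using \<open>A \<noteq> {}\<close> by (simp add: card_gt_0_iff)
  finally show ?thesis .
qed

lemma is_strategy_uniform_plus_direction:
  fixes h :: "'s \<Rightarrow> 'b::finite \<Rightarrow> real"
  assumes "A \<noteq> {}" "\<And>s. (\<Sum>b\<in>UNIV. h s b) = 0" "\<And>s b. b \<notin> A \<Longrightarrow> 0 \<le> h s b"
    and "\<And>s b. \<bar>h s b\<bar> \<le> 1 / card A"
  shows "is_strategy (\<lambda>s b. (if b \<in> A then 1 / card A else 0) + h s b)"
  unfolding is_strategy_def is_distr_def
proof (intro allI conjI)
  show "0 \<le> (if b \<in> A then 1 / card A else 0) + h s b" for s b
    using assms(3)[of b s] assms(4)[of s b] by (auto simp: abs_le_iff)
  show "(\<Sum>b\<in>UNIV. (if b \<in> A then 1 / card A else 0) + h s b) = 1" for s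
    using assms(1,2) by (simp add: sum.distrib sum.If_cases card_gt_0_iff)
qed

lemma conditionB_of_admissible_direction:
  fixes u :: "('s::finite, 'b::finite) game"
  assumes A: "A = {b. pooled_payoff u m b = v2 u m}"
    and h: "admissible_direction u m A h" "h s0 \<noteq> h t0"
  shows "conditionB u m"
proof -
  define q where "q b = (if b \<in> A then 1 / card A else 0)" for b
  define R where "R = (\<Sum>s\<in>UNIV. \<Sum>b\<in>UNIV. \<bar>h s b\<bar>)"
  define t where "t = 1 / (card A * (R + 1))"
  define y where "y s b = q b + t * h s b" for s b
  have "A \<noteq> {}"
    using v2_attained[of u m] A by auto
  have R: "\<bar>h s b\<bar> \<le> R" for s b
    unfolding R_def by (rule abs_le_double_sum_abs)
  have "0 < t"
    using \<open>A \<noteq> {}\<close> R[of s0 undefined] by (simp add: t_def card_gt_0_iff)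
  have "\<bar>t * h s b\<bar> \<le> 1 / card A" for s b
  proof -
    have "\<bar>t * h s b\<bar> \<le> t * R"
      using R \<open>0 < t\<close> by (simp add: abs_mult mult_left_mono)
    also have "\<dots> = R / (R + 1) * (1 / card A)"
      by (simp add: t_def)
    also have "\<dots> \<le> 1 / card A"
      using R[of s b] by (intro mult_left_le_one_le) auto
    finally show ?thesis .
  qed
  then have "is_strategy y"
    using is_strategy_uniform_plus_direction[OF \<open>A \<noteq> {}\<close>, of "\<lambda>s b. t * h s b"] h(1) \<open>0 < t\<close>
    by (simp add: y_def[abs_def] q_def admissible_direction_def flip: sum_distrib_left)
  moreover have "y s0 \<noteq> y t0"
    using h(2) \<open>0 < t\<close> by (auto simp: y_def fun_eq_iff)
  moreover have "sender_gap u \<mu> y = t * sender_gap u \<mu> h" for \<mu>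
    by (rule sender_gap_scaled) (simp add: y_def algebra_simps)
  then have "C1 u m y"
    using h(1) \<open>0 < t\<close> by (simp add: C1_iff_sender_gap admissible_direction_def)
  moreover have "receiver_value u m y = v2 u m + t * receiver_value u m h"
    using receiver_value_add_scaled[of u m "\<lambda>_. q" t h] receiver_value_uniform_on_argmax[OF A]
    by (simp add: y_def[abs_def] q_def[abs_def])
  then have "C2 u m y"
    using h(1) \<open>0 < t\<close> by (simp add: C2_iff_receiver_value admissible_direction_def)
  ultimately show ?thesis
    unfolding conditionB_def by blast
qed

definition centered_direction :: "('b \<Rightarrow> real) \<Rightarrow> ('s::finite \<Rightarrow> 'b::finite \<Rightarrow> real) \<Rightarrow> 's \<Rightarrow> 'b \<Rightarrow> real" where
  "centered_direction q y s b = (y s b - q b) / spread y"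

definition push_mass :: "'b::finite set \<Rightarrow> 'b \<Rightarrow> ('b \<Rightarrow> real) \<Rightarrow> 'b \<Rightarrow> real" where
  "push_mass A b0 q b = (if b \<in> A then q b + (if b = b0 then (\<Sum>c\<in>-A. q c) else 0) else 0)"

lemma centered_direction_diff:
  "centered_direction q y s b - centered_direction q y a b = (y s b - y a b) / spread y"
  by (simp add: centered_direction_def diff_divide_distrib)

lemma spread_centered_direction:
  assumes "0 < spread y"
  shows "spread (centered_direction q y) = 1"
  using assms by (simp add: spread_def centered_direction_diff flip: sum_divide_distrib)

lemma admissible_centered_direction:
  fixes u :: "('s::finite, 'b::finite) game"
  assumes y: "is_strategy y" "C1 u m y" "C2 u m y" "0 < spread y"
    and q: "is_distr q" "\<And>b. b \<notin> A \<Longrightarrow> q b = 0"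
  shows "admissible_direction u m A (centered_direction q y)"
  unfolding admissible_direction_def
proof (intro conjI allI impI ballI)
  show "(\<Sum>b\<in>UNIV. centered_direction q y s b) = 0" for s
    using is_strategy_sum[OF y(1)] q(1)
    by (simp add: centered_direction_def sum_subtractf is_distr_def flip: sum_divide_distrib)
  show "0 \<le> centered_direction q y s b" if "b \<notin> A" for s b
    using q(2)[OF that] is_strategy_nonneg[OF y(1)] y(4) by (simp add: centered_direction_def)
  show "0 \<le> sender_gap u \<mu> (centered_direction q y)" if "\<mu> \<in> Mset m" for \<mu>
  proof -
    have "sender_gap u \<mu> (centered_direction q y) = 1 / spread y * sender_gap u \<mu> y"
      by (rule sender_gap_scaled) (simp add: centered_direction_diff)
    then show ?thesis
      using y(2,4) that by (simp add: C1_iff_sender_gap)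
  qed
  have "receiver_value u m (\<lambda>_. q) \<le> v2 u m"
  proof -
    have "receiver_value u m (\<lambda>_. q) \<le> (\<Sum>b\<in>UNIV. q b * v2 u m)"
      unfolding receiver_value_pooling using q(1)
      by (intro sum_mono mult_left_mono pooled_payoff_le_v2) (simp add: is_distr_def)
    then show ?thesis
      using q(1) by (simp add: is_distr_def flip: sum_distrib_right)
  qed
  then have "0 \<le> receiver_value u m (\<lambda>s b. y s b - q b)"
    using y(3) by (simp add: receiver_value_diff C2_iff_receiver_value)
  moreover have "receiver_value u m (centered_direction q y)
      = receiver_value u m (\<lambda>s b. y s b - q b) / spread y"
    by (simp add: receiver_value_def centered_direction_def flip: sum_divide_distrib)
  ultimately show "0 \<le> receiver_value u m (centered_direction q y)"
    using y(4) by simp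
qed

lemma is_distr_push_mass:
  assumes "is_distr q" "b0 \<in> A"
  shows "is_distr (push_mass A b0 q)"
proof -
  have "(\<Sum>b\<in>UNIV. push_mass A b0 q b) = (\<Sum>b\<in>A. q b) + (\<Sum>c\<in>-A. q c)"
    using assms(2) by (simp add: push_mass_def sum.If_cases sum.distrib Int_absorb1)
  also have "\<dots> = 1"
    using assms(1) sum.union_disjoint[of A "-A" q] by (simp add: is_distr_def)
  finally show ?thesis
    using assms(1) by (auto simp: is_distr_def push_mass_def intro!: add_nonneg_nonneg sum_nonneg)
qed

lemma abs_sub_push_mass_le:
  assumes "is_distr q"
  shows "\<bar>q b - push_mass A b0 q b\<bar> \<le> (\<Sum>c\<in>-A. q c)"
proof -
  have "0 \<le> (\<Sum>c\<in>-A. q c)"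
    using assms by (simp add: is_distr_def sum_nonneg)
  moreover have "q b \<le> (\<Sum>c\<in>-A. q c)" if "b \<notin> A"
    using assms that by (intro member_le_sum) (auto simp: is_distr_def)
  ultimately show ?thesis
    using assms by (auto simp: push_mass_def is_distr_def)
qed

lemma abs_centered_direction_le:
  assumes "\<And>s. 0 \<le> m s" "(\<Sum>s\<in>UNIV. m s) = 1" "0 < spread y"
  shows "\<bar>centered_direction q y s b\<bar> \<le> 1 + \<bar>mean_mix m y b - q b\<bar> / spread y"
proof -
  have "\<bar>centered_direction q y s b\<bar> = \<bar>y s b - q b\<bar> / spread y"
    using assms(3) by (simp add: centered_direction_def)
  also have "\<dots> \<le> (spread y + \<bar>mean_mix m y b - q b\<bar>) / spread y"
    using abs_sub_mean_mix_le_spread[OF assms(1,2), of y s b] assms(3)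
    by (intro divide_right_mono) linarith+
  also have "\<dots> = 1 + \<bar>mean_mix m y b - q b\<bar> / spread y"
    using assms(3) by (simp add: add_divide_distrib)
  finally show ?thesis .
qed

lemma mean_mix_regret_le:
  fixes u :: "('s::finite, 'b::finite) game"
  assumes m: "\<And>s. 0 \<le> m s" "(\<Sum>s\<in>UNIV. m s) = 1" and y: "is_strategy y" "C2 u m y"
  shows "mean_mix m y b * (v2 u m - pooled_payoff u m b) \<le> spread y * receiver_payoff_size u m"
proof -
  let ?z = "mean_mix m y"
  have z: "is_distr ?z"
    by (rule is_distr_mean_mix[OF m y(1)])
  have "?z b * (v2 u m - pooled_payoff u m b) \<le> (\<Sum>c\<in>UNIV. ?z c * (v2 u m - pooled_payoff u m c))"
    using z by (intro member_le_sum mult_nonneg_nonneg) (auto simp: is_distr_def pooled_payoff_le_v2)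
  also have "\<dots> = v2 u m - receiver_value u m (\<lambda>_. ?z)"
    using z by (simp add: receiver_value_pooling right_diff_distrib sum_subtractf is_distr_def
        flip: sum_distrib_right)
  also have "\<dots> \<le> receiver_value u m (\<lambda>s c. y s c - ?z c)"
    using y(2) by (simp add: receiver_value_diff C2_iff_receiver_value)
  also have "\<dots> \<le> spread y * receiver_payoff_size u m"
  proof -
    have "\<bar>receiver_value u m (\<lambda>s c. y s c - ?z c)\<bar> \<le> spread y * receiver_payoff_size u m"
      by (intro abs_receiver_value_le abs_sub_mean_mix_le_spread m)
    then show ?thesis
      by (simp add: abs_le_iff)
  qed
  finally show ?thesis .
qed

lemma admissible_direction_limit:
  fixes u :: "nat \<Rightarrow> ('s::finite, 'b::finite) game"
  assumes u: "\<And>s b. (\<lambda>k. u k s b) \<longlonglongrightarrow> G s b" and h: "\<And>s b. (\<lambda>k. h k s b) \<longlonglongrightarrow> hl s b"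
    and adm: "\<And>k. admissible_direction (u k) m A (h k)"
  shows "admissible_direction G m A hl"
  unfolding admissible_direction_def
proof (intro conjI allI impI ballI)
  show "(\<Sum>b\<in>UNIV. hl s b) = 0" for s
  proof (rule LIMSEQ_unique)
    show "(\<lambda>k. \<Sum>b\<in>UNIV. h k s b) \<longlonglongrightarrow> (\<Sum>b\<in>UNIV. hl s b)"
      by (intro tendsto_sum h)
    show "(\<lambda>k. \<Sum>b\<in>UNIV. h k s b) \<longlonglongrightarrow> 0"
      using adm by (simp add: admissible_direction_def)
  qed
  show "0 \<le> hl s b" if "b \<notin> A" for s b
    using adm that by (intro LIMSEQ_le_const[OF h]) (auto simp: admissible_direction_def)
  show "0 \<le> sender_gap G \<mu> hl" if "\<mu> \<in> Mset m" for \<mu>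
  proof (rule LIMSEQ_le_const)
    show "(\<lambda>k. sender_gap (u k) \<mu> (h k)) \<longlonglongrightarrow> sender_gap G \<mu> hl"
      unfolding sender_gap_def by (intro tendsto_intros h tendsto_fst u)
    show "\<exists>N. \<forall>k\<ge>N. 0 \<le> sender_gap (u k) \<mu> (h k)"
      using adm that by (auto simp: admissible_direction_def)
  qed
  show "0 \<le> receiver_value G m hl"
  proof (rule LIMSEQ_le_const)
    show "(\<lambda>k. receiver_value (u k) m (h k)) \<longlonglongrightarrow> receiver_value G m hl"
      unfolding receiver_value_def by (intro tendsto_intros h tendsto_snd u)
    show "\<exists>N. \<forall>k\<ge>N. 0 \<le> receiver_value (u k) m (h k)"
      using adm by (auto simp: admissible_direction_def)
  qed
qed

lemma eventually_mean_mix_over_spread_bounded: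
  fixes u :: "nat \<Rightarrow> ('s::finite, 'b::finite) game"
  assumes m: "\<And>s. 0 \<le> m s" "(\<Sum>s\<in>UNIV. m s) = 1"
    and u: "\<And>s b. (\<lambda>k. u k s b) \<longlonglongrightarrow> G s b"
    and y: "\<And>k. is_strategy (y k)" "\<And>k. C2 (u k) m (y k)" "\<And>k. 0 < spread (y k)"
    and b: "pooled_payoff G m b < v2 G m"
  shows "\<exists>C. eventually (\<lambda>k. mean_mix m (y k) b / spread (y k) \<le> C) sequentially"
proof -
  obtain b0 where b0: "pooled_payoff G m b0 = v2 G m"
    using v2_attained by blast
  define g where "g = v2 G m - pooled_payoff G m b"
  have "0 < g"
    using b by (simp add: g_def)
  have pooled: "(\<lambda>k. pooled_payoff (u k) m c) \<longlonglongrightarrow> pooled_payoff G m c" for c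
    unfolding pooled_payoff_def by (intro tendsto_intros tendsto_snd u)
  have "(\<lambda>k. pooled_payoff (u k) m b0 - pooled_payoff (u k) m b) \<longlonglongrightarrow> g"
    using tendsto_diff[OF pooled[of b0] pooled[of b]] b0 by (simp add: g_def)
  then have "eventually (\<lambda>k. g / 2 < pooled_payoff (u k) m b0 - pooled_payoff (u k) m b) sequentially"
    by (rule order_tendstoD) (use \<open>0 < g\<close> in simp_all)
  moreover have "(\<lambda>k. receiver_payoff_size (u k) m) \<longlonglongrightarrow> receiver_payoff_size G m"
    unfolding receiver_payoff_size_def by (intro tendsto_intros tendsto_snd u)
  then have "eventually (\<lambda>k. receiver_payoff_size (u k) m < receiver_payoff_size G m + 1) sequentially"
    by (rule order_tendstoD) simp
  ultimately have "eventually (\<lambda>k. mean_mix m (y k) b / spread (y k) \<le> (receiver_payoff_size G m + 1) / (g / 2)) sequentially"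
  proof eventually_elim
    case (elim k)
    let ?r = "v2 (u k) m - pooled_payoff (u k) m b"
    have "g / 2 < ?r"
      using elim pooled_payoff_le_v2[of "u k" m b0] by linarith
    have size_nonneg: "0 \<le> receiver_payoff_size (u k) m"
      using m(1) by (auto simp: receiver_payoff_size_def intro!: sum_nonneg mult_nonneg_nonneg)
    have "mean_mix m (y k) b * ?r \<le> spread (y k) * receiver_payoff_size (u k) m"
      by (rule mean_mix_regret_le[OF m y(1,2)])
    then have "mean_mix m (y k) b / spread (y k) \<le> receiver_payoff_size (u k) m / ?r"
      using y(3)[of k] \<open>g / 2 < ?r\<close> \<open>0 < g\<close> by (simp add: field_simps)
    also have "\<dots> \<le> (receiver_payoff_size G m + 1) / (g / 2)"
      using elim \<open>g / 2 < ?r\<close> \<open>0 < g\<close> size_nonneg by (intro frac_le) simp_all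
    finally show ?case .
  qed
  then show ?thesis
    by blast
qed

lemma eventually_bounded_centered_directions:
  fixes u :: "nat \<Rightarrow> ('s::finite, 'b::finite) game"
  assumes m: "\<And>s. 0 \<le> m s" "(\<Sum>s\<in>UNIV. m s) = 1"
    and u: "\<And>s b. (\<lambda>k. u k s b) \<longlonglongrightarrow> G s b"
    and y: "\<And>k. is_strategy (y k)" "\<And>k. C2 (u k) m (y k)" "\<And>k. 0 < spread (y k)"
    and A: "A = {b. pooled_payoff G m b = v2 G m}"
  shows "\<exists>R. eventually (\<lambda>k. \<forall>s b.
      \<bar>centered_direction (push_mass A b0 (mean_mix m (y k))) (y k) s b\<bar> \<le> R) sequentially"
proof -
  have "\<exists>C. eventually (\<lambda>k. mean_mix m (y k) c / spread (y k) \<le> C) sequentially" if "c \<notin> A" for c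
  proof (rule eventually_mean_mix_over_spread_bounded[OF m u y])
    show "pooled_payoff G m c < v2 G m"
      using that pooled_payoff_le_v2[of G m c] unfolding A by (simp add: order_less_le)
  qed
  then have "\<forall>c. \<exists>C. c \<notin> A \<longrightarrow> eventually (\<lambda>k. mean_mix m (y k) c / spread (y k) \<le> C) sequentially"
    by blast
  from choice[OF this] obtain C
    where "\<And>c. c \<notin> A \<Longrightarrow> eventually (\<lambda>k. mean_mix m (y k) c / spread (y k) \<le> C c) sequentially"
    by blast
  then have ev: "eventually (\<lambda>k. \<forall>c. c \<notin> A \<longrightarrow> mean_mix m (y k) c / spread (y k) \<le> C c) sequentially"
    by (intro eventually_all_finite) simp
  have bound:  "\<forall>s b. \<bar>centered_direction (push_mass A b0 (mean_mix m (y k))) (y k) s b\<bar>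
      \<le> 1 + (\<Sum>c\<in>-A. C c)"
    if C: "\<forall>c. c \<notin> A \<longrightarrow> mean_mix m (y k) c / spread (y k) \<le> C c" for k
  proof (intro allI)
    fix s b
    let ?z = "mean_mix m (y k)"
    have "\<bar>centered_direction (push_mass A b0 ?z) (y k) s b\<bar> \<le> 1 + \<bar>?z b - push_mass A b0 ?z b\<bar> / spread (y k)"
      by (rule abs_centered_direction_le[OF m y(3)])
    also have "\<dots> \<le> 1 + (\<Sum>c\<in>-A. ?z c) / spread (y k)"
      using abs_sub_push_mass_le[OF is_distr_mean_mix[OF m y(1)], where b = b and A = A and b0 = b0] y(3)[of k]
      by (simp add: divide_right_mono)
    also have "\<dots> \<le> 1 + (\<Sum>c\<in>-A. C c)"
      using C by (simp add: sum_divide_distrib, intro sum_mono) auto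
    finally show "\<bar>centered_direction (push_mass A b0 ?z) (y k) s b\<bar> \<le> 1 + (\<Sum>c\<in>-A. C c)" .
  qed
  show ?thesis
    by (rule exI, rule eventually_mono[OF ev bound])
qed

lemma closed_conditionB:
  assumes m: "\<And>s. 0 \<le> m s" "(\<Sum>s\<in>UNIV. m s) = 1"
  shows "closed {G :: ('s::finite, 'b::finite) game. conditionB G m}"
  unfolding closed_sequential_limits
proof (intro allI impI, elim conjE)
  fix u :: "nat \<Rightarrow> ('s, 'b) game" and G
  assume uB: "\<forall>k. u k \<in> {G. conditionB G m}" and "u \<longlonglongrightarrow> G"
  then have u: "(\<lambda>k. u k s b) \<longlonglongrightarrow> G s b" for s b
    by (simp add: tendsto_fun_iff)
  have "\<forall>k. \<exists>y. is_strategy y \<and> 0 < spread y \<and> C1 (u k) m y \<and> C2 (u k) m y"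
    using uB unfolding conditionB_def spread_pos_iff by blast
  from choice[OF this] obtain y where y: "\<And>k. is_strategy (y k)" "\<And>k. 0 < spread (y k)"
    "\<And>k. C1 (u k) m (y k)" "\<And>k. C2 (u k) m (y k)"
    by blast
  define A where "A = {b. pooled_payoff G m b = v2 G m}"
  obtain b0 where "b0 \<in> A"
    using v2_attained by (auto simp: A_def)
  define h where "h k = centered_direction (push_mass A b0 (mean_mix m (y k))) (y k)" for k
  have adm: "admissible_direction (u k) m A (h k)" for k
    unfolding h_def using y is_distr_push_mass[OF is_distr_mean_mix[OF m y(1)] \<open>b0 \<in> A\<close>]
    by (intro admissible_centered_direction) (auto simp: push_mass_def)
  have "\<exists>R. eventually (\<lambda>k. \<forall>s b. \<bar>h k s b\<bar> \<le> R) sequentially"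
    unfolding h_def by (rule eventually_bounded_centered_directions[OF m u y(1,4,2) A_def])
  then obtain R where "eventually (\<lambda>k. \<forall>s b. \<bar>h k s b\<bar> \<le> R) sequentially" ..
  then have "eventually (\<lambda>k. \<forall>x. \<bar>case_prod (h k) x\<bar> \<le> R) sequentially"
    by (simp add: case_prod_beta)
  from bounded_functions_convergent_subseq[OF this] obtain \<phi> l
    where \<phi>: "strict_mono \<phi>" and l': "\<forall>x. (\<lambda>j. case_prod (h (\<phi> j)) x) \<longlonglongrightarrow> l x"
    by blast
  have l: "(\<lambda>j. h (\<phi> j) s b) \<longlonglongrightarrow> l (s, b)" for s b
    using spec[OF l', of "(s, b)"] by simp
  have "(\<lambda>j. u (\<phi> j) s b) \<longlonglongrightarrow> G s b" for s b
    using LIMSEQ_subseq_LIMSEQ[OF u \<phi>] by (simp add: o_def)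
  then have "admissible_direction G m A (\<lambda>s b. l (s, b))"
    using l adm by (rule admissible_direction_limit)
  moreover have "spread (\<lambda>s b. l (s, b)) = 1"
  proof (rule LIMSEQ_unique)
    show "(\<lambda>j. spread (h (\<phi> j))) \<longlonglongrightarrow> spread (\<lambda>s b. l (s, b))"
      unfolding spread_def by (intro tendsto_intros l)
    show "(\<lambda>j. spread (h (\<phi> j))) \<longlonglongrightarrow> 1"
      by (simp add: h_def spread_centered_direction[OF y(2)])
  qed
  then obtain s t where "(\<lambda>b. l (s, b)) \<noteq> (\<lambda>b. l (t, b))"
    using spread_pos_iff[of "\<lambda>s b. l (s, b)"] by auto
  ultimately show "G \<in> {G. conditionB G m}"
    using conditionB_of_admissible_direction[OF A_def] by blast
qed

theorem theorem3:
  fixes p :: "'s::finite \<Rightarrow> 's \<Rightarrow> real"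
    and m :: "'s \<Rightarrow> real"
    and G :: "('s, 'b::finite) game"
  assumes "stochastic p"
    and "irreducible_chain p"
    and "aperiodic_chain p"
    and "invariant_measure p m"
  shows "(conditionB G m \<longrightarrow>
            (\<forall>N. open N \<and> G \<in> N \<longrightarrow> (\<exists>G'\<in>N. Ehat G' m \<noteq> {})))
       \<and> (\<not> conditionB G m \<longrightarrow>
            (\<exists>N. open N \<and> G \<in> N \<and> (\<forall>G'\<in>N. \<not> conditionB G' m)))"
proof (intro conjI impI allI)
  have m_pos: "0 < m s" for s
    using invariant_measure_pos[OF assms(1,2,4)] .
  have m_sum: "(\<Sum>s\<in>UNIV. m s) = 1"
    using assms(4) by (simp add: invariant_measure_def is_distr_def)
  show "\<exists>G'\<in>N. Ehat G' m \<noteq> {}" if "conditionB G m" "open N \<and> G \<in> N" for N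
  proof -
    have "G \<in> closure {G'. Ehat G' m \<noteq> {}}"
      by (rule closure_of_scaled_perturbations[where C = 2],
          rule exists_perturbation_with_Ehat[OF m_pos m_sum that(1)])
    then have "G \<in> N \<inter> closure {G'. Ehat G' m \<noteq> {}}"
      using that(2) by blast
    then have "N \<inter> {G'. Ehat G' m \<noteq> {}} \<noteq> {}"
      using open_Int_closure_eq_empty[of N] that(2) by blast
    then show ?thesis
      by blast
  qed
  show "\<exists>N. open N \<and> G \<in> N \<and> (\<forall>G'\<in>N. \<not> conditionB G' m)" if "\<not> conditionB G m"
  proof (intro exI conjI)
    show "open (- {G. conditionB G m})"
      using closed_conditionB[OF less_imp_le[OF m_pos] m_sum] by (rule open_Compl)
  qed (use that in auto)
qed

end
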